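(* Let $(X,\le)$ be a locally finite poset and $R$ a commutative ring with identity. Let $\eta\in[\mathbb{I}_{(X,\le)},R]$ be given by $\eta[x,x]=1$, $\eta[x,y]=-1$ if $x\prec y$, and $\eta[x,y]=0$ otherwise. Then $\eta$ is invertible in the incidence algebra and, for all $x\le y$, $\eta^{-1}[x,y]=|\mathbb{M}[x,y]|$, the number of maximal linearly ordered subsets of the interval $[x,y]$. Consequently, for $a\in X$ and $f,g:X_{\ge a}\to R$, one has $g(y)=f(y)-\sum_{a\le x\prec y}f(x)$ for all $y\ge a$ if and only if $f(y)=\sum_{a\le x\le y}|\mathbb{M}[x,y]|\,g(x)$ for all $y\ge a$.
   Context: A poset is locally finite if all intervals $[x,y]=\{z:x\le z\le y\}$ are finite. The cover relation: $x\prec y$ iff $x<y$ and there is no $z$ with $x<z<y$. $X_{\ge a}=\{x\in X: x\ge a\}$. The incidence algebra $[\mathbb{I}_{(X,\le)},R]$ consists of maps from intervals to $R$ with product $(f\star g)[x,z]=\sum_{x\le y\le z}f[x,y]g[y,z]$ and unit $\epsilon[x,y]=\delta_{x,y}$. *)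

theory Defs
  imports Main
begin

text \<open>A poset X is modelled as a type of class order; local finiteness is an explicit hypothesis.\<close>

definition locally_finite :: "'a::order itself \<Rightarrow> bool" where
  "locally_finite _ \<longleftrightarrow> (\<forall>x y::'a. finite {x..y})"

definition covers :: "'a::order \<Rightarrow> 'a \<Rightarrow> bool" (infix "\<prec>\<^sub>c" 50) where
  "x \<prec>\<^sub>c y \<longleftrightarrow> x < y \<and> \<not> (\<exists>z. x < z \<and> z < y)"

text \<open>Elements of the incidence algebra: maps on intervals, represented as functions of
  the two endpoints; only the values at x \<le> y are meaningful.\<close>
definition inc_mult :: "('a::order \<Rightarrow> 'a \<Rightarrow> 'r::comm_ring_1) \<Rightarrow> ('a \<Rightarrow> 'a \<Rightarrow> 'r) \<Rightarrow> 'a \<Rightarrow> 'a \<Rightarrow> 'r"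
  (infixl "\<star>" 70) where
  "(f \<star> g) x z = (\<Sum>y\<in>{x..z}. f x y * g y z)"

definition inc_unit :: "'a::order \<Rightarrow> 'a \<Rightarrow> 'r::comm_ring_1" where
  "inc_unit x y = (if x = y then 1 else 0)"

definition inc_eq :: "('a::order \<Rightarrow> 'a \<Rightarrow> 'r) \<Rightarrow> ('a \<Rightarrow> 'a \<Rightarrow> 'r) \<Rightarrow> bool" where
  "inc_eq f g \<longleftrightarrow> (\<forall>x y. x \<le> y \<longrightarrow> f x y = g x y)"

definition inc_inverse_of :: "('a::order \<Rightarrow> 'a \<Rightarrow> 'r::comm_ring_1) \<Rightarrow> ('a \<Rightarrow> 'a \<Rightarrow> 'r) \<Rightarrow> bool" where
  "inc_inverse_of h f \<longleftrightarrow> inc_eq (f \<star> h) inc_unit \<and> inc_eq (h \<star> f) inc_unit"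

definition inc_invertible :: "('a::order \<Rightarrow> 'a \<Rightarrow> 'r::comm_ring_1) \<Rightarrow> bool" where
  "inc_invertible f \<longleftrightarrow> (\<exists>h. inc_inverse_of h f)"

definition eta :: "'a::order \<Rightarrow> 'a \<Rightarrow> 'r::comm_ring_1" where
  "eta x y = (if x = y then 1 else if x \<prec>\<^sub>c y then -1 else 0)"

definition linearly_ordered :: "'a::order set \<Rightarrow> bool" where
  "linearly_ordered C \<longleftrightarrow> (\<forall>a\<in>C. \<forall>b\<in>C. a \<le> b \<or> b \<le> a)"

definition max_chains :: "'a::order \<Rightarrow> 'a \<Rightarrow> 'a set set" where
  "max_chains x y = {C. C \<subseteq> {x..y} \<and> linearly_ordered C \<and>
      (\<forall>D. D \<subseteq> {x..y} \<and> linearly_ordered D \<and> C \<subseteq> D \<longrightarrow> D = C)}"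

end

theory Submission
  imports Defs
begin

(* For an abstract partial order relation, a maximal chain of a finite
       interval [x,z] with x \<noteq> z consists of z together with a maximal chain of [x,y],
       where y is the (unique) element of the chain covered by z.  Hence
         |M[x,z]| = \<Sum>{ |M[x,y]| : x \<le> y \<prec> z }   and   |M[x,x]| = 1.
       Working in a locale over an arbitrary order relation lets us apply the same recursion
       to the dual order, which yields the companion recursion over elements covering x.
   (2) Incidence algebra.  For a locally finite poset the convolution is associative and
       has inc_unit as two-sided unit; consequently inverses are unique, and an invertible
       element e gives an inversion principle for "row vectors" f : X\<^sub>\<ge>\<^sub>a \<rightarrow> R.
   (3) The element eta.  Convolving with eta subtracts the sum over covers, so the two
       chain-counting recursions say exactly that the chain counting function is a right
       and a left inverse of eta. *)

subsection \<open>Maximal chains in an abstract partial order\<close>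

text \<open>A partial order given as a relation, so that the results below can be applied both to
  the order of a poset and to its dual.\<close>
locale poset_rel =
  fixes le :: "'a \<Rightarrow> 'a \<Rightarrow> bool" (infix "\<sqsubseteq>" 50)
  assumes refl: "x \<sqsubseteq> x"
    and trans: "x \<sqsubseteq> y \<Longrightarrow> y \<sqsubseteq> z \<Longrightarrow> x \<sqsubseteq> z"
    and antisym: "x \<sqsubseteq> y \<Longrightarrow> y \<sqsubseteq> x \<Longrightarrow> x = y"
begin

definition ivl :: "'a \<Rightarrow> 'a \<Rightarrow> 'a set" where
  "ivl x z = {w. x \<sqsubseteq> w \<and> w \<sqsubseteq> z}"

definition totally_ordered :: "'a set \<Rightarrow> bool" where
  "totally_ordered C \<longleftrightarrow> (\<forall>a\<in>C. \<forall>b\<in>C. a \<sqsubseteq> b \<or> b \<sqsubseteq> a)"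

definition maxchains :: "'a \<Rightarrow> 'a \<Rightarrow> 'a set set" where
  "maxchains x z = {C. C \<subseteq> ivl x z \<and> totally_ordered C \<and>
     (\<forall>D. D \<subseteq> ivl x z \<and> totally_ordered D \<and> C \<subseteq> D \<longrightarrow> D = C)}"

definition covered_by :: "'a \<Rightarrow> 'a \<Rightarrow> bool" where
  "covered_by y z \<longleftrightarrow> y \<sqsubseteq> z \<and> y \<noteq> z \<and> \<not> (\<exists>w. y \<sqsubseteq> w \<and> w \<noteq> y \<and> w \<sqsubseteq> z \<and> w \<noteq> z)"

lemma maxchainsD:
  assumes "C \<in> maxchains x z"
  shows "C \<subseteq> ivl x z" "totally_ordered C"
    "\<And>D. D \<subseteq> ivl x z \<Longrightarrow> totally_ordered D \<Longrightarrow> C \<subseteq> D \<Longrightarrow> D = C"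
  using assms unfolding maxchains_def by auto

lemma totally_ordered_greatest:
  assumes "finite S" "S \<noteq> {}" "totally_ordered S"
  shows "\<exists>y\<in>S. \<forall>c\<in>S. c \<sqsubseteq> y"
  using assms
proof (induction S rule: finite_ne_induct)
  case (singleton x) then show ?case using refl by auto
next
  case (insert a F)
  then obtain y where y: "y \<in> F" "\<forall>c\<in>F. c \<sqsubseteq> y"
    unfolding totally_ordered_def by auto
  have "y \<sqsubseteq> a \<or> a \<sqsubseteq> y" using insert.prems y(1) unfolding totally_ordered_def by auto
  then show ?case using y refl trans by blast
qed

lemma maxchain_endpoints:
  assumes C: "C \<in> maxchains x z" and "x \<sqsubseteq> z"
  shows "x \<in> C" "z \<in> C"
proof -
  note C' = maxchainsD[OF C]
  have le_all: "x \<sqsubseteq> c" "c \<sqsubseteq> z" if "c \<in> C" for c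
    using that C'(1) unfolding ivl_def by auto
  have "insert x C = C"
    by (rule C'(3)) (use C'(2) le_all assms(2) refl in \<open>auto simp: ivl_def totally_ordered_def\<close>)
  moreover have "insert z C = C"
    by (rule C'(3)) (use C'(2) le_all assms(2) refl in \<open>auto simp: ivl_def totally_ordered_def\<close>)
  ultimately show "x \<in> C" "z \<in> C" by blast+
qed

lemma maxchains_refl: "maxchains x x = {{x}}"
proof -
  have I: "ivl x x = {x}" using refl antisym unfolding ivl_def by auto
  have "C = {x}" if "C \<in> maxchains x x" for C
    using maxchain_endpoints[OF that refl] maxchainsD(1)[OF that] I by auto
  moreover have "{x} \<in> maxchains x x"
    unfolding maxchains_def I totally_ordered_def using refl by auto
  ultimately show ?thesis by blast
qed

lemma chain_insert_top:
  assumes "D \<subseteq> ivl x y" "totally_ordered D" "x \<sqsubseteq> y" "y \<sqsubseteq> z"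
  shows "insert z D \<subseteq> ivl x z" "totally_ordered (insert z D)"
proof -
  have "x \<sqsubseteq> d \<and> d \<sqsubseteq> z" if "d \<in> D" for d
    using that assms(1,4) trans unfolding ivl_def by blast
  then show "insert z D \<subseteq> ivl x z" "totally_ordered (insert z D)"
    using assms(2-4) trans refl unfolding ivl_def totally_ordered_def by blast+
qed

lemma maxchain_remove_top:
  assumes fin: "finite (ivl x z)" and C: "C \<in> maxchains x z" and xz: "x \<sqsubseteq> z" "x \<noteq> z"
  obtains y where "x \<sqsubseteq> y" "covered_by y z" "C - {z} \<in> maxchains x y" "C = insert z (C - {z})"
proof -
  note C' = maxchainsD[OF C]
  define S where "S = C - {z}"
  have xS: "x \<in> S" using maxchain_endpoints[OF C xz(1)] xz unfolding S_def by auto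
  have chS: "totally_ordered S" using C'(2) unfolding S_def totally_ordered_def by auto
  have "finite S" using finite_subset[OF C'(1) fin] unfolding S_def by auto
  then obtain y where y: "y \<in> S" "\<forall>c\<in>S. c \<sqsubseteq> y"
    using totally_ordered_greatest chS xS by blast
  have yz: "y \<sqsubseteq> z" "y \<noteq> z" using y(1) C'(1) unfolding S_def ivl_def by auto
  have xy: "x \<sqsubseteq> y" using y(2) xS by auto
  have "covered_by y z"
    unfolding covered_by_def
  proof (intro conjI yz notI)
    assume "\<exists>w. y \<sqsubseteq> w \<and> w \<noteq> y \<and> w \<sqsubseteq> z \<and> w \<noteq> z"
    then obtain w where w: "y \<sqsubseteq> w" "w \<noteq> y" "w \<sqsubseteq> z" "w \<noteq> z" by blast
    have "c \<sqsubseteq> w \<or> w \<sqsubseteq> c" if "c \<in> C" for c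
      using that y(2) w trans unfolding S_def by (cases "c = z") auto
    then have "totally_ordered (insert w C)"
      using C'(2) refl unfolding totally_ordered_def by blast
    moreover have "insert w C \<subseteq> ivl x z" using C'(1) w xy trans unfolding ivl_def by blast
    ultimately have "w \<in> S" using C'(3) w unfolding S_def by blast
    then show False using y(2) w antisym by blast
  qed
  moreover have "S \<in> maxchains x y"
    unfolding maxchains_def
  proof (intro CollectI conjI allI impI)
    show "S \<subseteq> ivl x y" using y(2) C'(1) unfolding S_def ivl_def by auto
    show "totally_ordered S" by (rule chS)
    fix D assume D: "D \<subseteq> ivl x y \<and> totally_ordered D \<and> S \<subseteq> D"
    have "insert z D = C"
    proof (rule C'(3))
      show "insert z D \<subseteq> ivl x z" "totally_ordered (insert z D)"
        using chain_insert_top[of D x y z] D xy yz by blast+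
      show "C \<subseteq> insert z D" using D unfolding S_def by auto
    qed
    moreover have "z \<notin> D" using D yz antisym unfolding ivl_def by blast
    ultimately show "D = S" unfolding S_def by auto
  qed
  moreover have "C = insert z S" using maxchain_endpoints[OF C xz(1)] unfolding S_def by auto
  ultimately show thesis using that xy unfolding S_def by blast
qed

lemma maxchain_extend_top:
  assumes D: "D \<in> maxchains x y" and xy: "x \<sqsubseteq> y" and yz: "covered_by y z"
  shows "insert z D \<in> maxchains x z"
proof -
  note D' = maxchainsD[OF D]
  have yz': "y \<sqsubseteq> z" using yz unfolding covered_by_def by auto
  have yD: "y \<in> D" using maxchain_endpoints[OF D xy] by auto
  show ?thesis
    unfolding maxchains_def
  proof (intro CollectI conjI allI impI)
    show "insert z D \<subseteq> ivl x z" "totally_ordered (insert z D)"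
      using chain_insert_top[OF D'(1,2) xy yz'] by blast+
    fix E assume E: "E \<subseteq> ivl x z \<and> totally_ordered E \<and> insert z D \<subseteq> E"
    have "E - {z} \<subseteq> ivl x y"
    proof
      fix e assume e: "e \<in> E - {z}"
      then have "e \<sqsubseteq> y \<or> y \<sqsubseteq> e" "x \<sqsubseteq> e" "e \<sqsubseteq> z"
        using E yD unfolding totally_ordered_def ivl_def by auto
      then show "e \<in> ivl x y" using yz e refl unfolding covered_by_def ivl_def by blast
    qed
    moreover have "z \<notin> D" using D'(1) yz antisym unfolding ivl_def covered_by_def by blast
    moreover have "totally_ordered (E - {z})" using E unfolding totally_ordered_def by blast
    moreover have "D \<subseteq> E - {z}" using E \<open>z \<notin> D\<close> by blast
    ultimately have "E - {z} = D" using D'(3) by blast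
    then show "E = insert z D" using E by auto
  qed
qed

lemma maxchains_decompose:
  assumes fin: "finite (ivl x z)" and xz: "x \<sqsubseteq> z" "x \<noteq> z"
  shows "maxchains x z = (\<Union>y\<in>{y. x \<sqsubseteq> y \<and> covered_by y z}. insert z ` maxchains x y)"
proof (intro equalityI subsetI)
  fix C assume "C \<in> maxchains x z"
  then obtain y where "x \<sqsubseteq> y" "covered_by y z" "C - {z} \<in> maxchains x y" "C = insert z (C - {z})"
    using maxchain_remove_top[OF fin _ xz] by blast
  then show "C \<in> (\<Union>y\<in>{y. x \<sqsubseteq> y \<and> covered_by y z}. insert z ` maxchains x y)" by blast
next
  fix C assume "C \<in> (\<Union>y\<in>{y. x \<sqsubseteq> y \<and> covered_by y z}. insert z ` maxchains x y)"
  then show "C \<in> maxchains x z" using maxchain_extend_top by blast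
qed

text \<open>Hence the maximal chains of \<open>[x,z]\<close> are partitioned according to the element
  covered by \<open>z\<close> they pass through, giving the counting recursion.\<close>
lemma card_maxchains_rec:
  assumes fin: "finite (ivl x z)" and xz: "x \<sqsubseteq> z" "x \<noteq> z"
  shows "card (maxchains x z) = (\<Sum>y\<in>{y. x \<sqsubseteq> y \<and> covered_by y z}. card (maxchains x y))"
proof -
  define Y where "Y = {y. x \<sqsubseteq> y \<and> covered_by y z}"
  have Y_ivl: "Y \<subseteq> ivl x z" unfolding Y_def ivl_def covered_by_def by auto
  have z_notin: "z \<notin> D" if "y \<in> Y" "D \<in> maxchains x y" for y D
    using that maxchainsD(1)[OF that(2)] antisym
    unfolding Y_def ivl_def covered_by_def by blast
  have fin_mc: "finite (maxchains x y)" if "y \<in> Y" for y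
  proof -
    have "maxchains x y \<subseteq> Pow (ivl x z)"
      using that trans unfolding maxchains_def Y_def covered_by_def ivl_def by blast
    then show ?thesis using fin finite_subset by blast
  qed
  have split: "maxchains x z = (\<Union>y\<in>Y. insert z ` maxchains x y)"
    unfolding Y_def by (rule maxchains_decompose[OF fin xz])
  have disjoint: "insert z ` maxchains x i \<inter> insert z ` maxchains x j = {}"
    if "i \<in> Y" "j \<in> Y" "i \<noteq> j" for i j
  proof (rule ccontr)
    assume "insert z ` maxchains x i \<inter> insert z ` maxchains x j \<noteq> {}"
    then obtain D1 D2 where D: "D1 \<in> maxchains x i" "D2 \<in> maxchains x j" "insert z D1 = insert z D2"
      by blast
    then have "D1 = D2" using z_notin that by (metis Diff_insert_absorb)
    have "x \<sqsubseteq> i" "x \<sqsubseteq> j" using that unfolding Y_def by auto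
    then have "i \<in> D1" "j \<in> D2" using maxchain_endpoints D by blast+
    then have "i \<sqsubseteq> j" "j \<sqsubseteq> i" using D \<open>D1 = D2\<close> maxchainsD(1) unfolding ivl_def by blast+
    then show False using antisym that by auto
  qed
  have inj: "inj_on (insert z) (maxchains x y)" if "y \<in> Y" for y
    using z_notin[OF that] unfolding inj_on_def by (metis Diff_insert_absorb)
  have "card (maxchains x z) = (\<Sum>y\<in>Y. card (insert z ` maxchains x y))"
    unfolding split using finite_subset[OF Y_ivl fin] disjoint fin_mc
    by (intro card_UN_disjoint) auto
  also have "\<dots> = (\<Sum>y\<in>Y. card (maxchains x y))"
    by (rule sum.cong) (auto simp: card_image inj)
  finally show ?thesis unfolding Y_def .
qed

end

subsection \<open>Incidence algebras of locally finite posets\<close>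

lemma locally_finiteD: "locally_finite TYPE('a::order) \<Longrightarrow> finite {x..y::'a}"
  unfolding locally_finite_def by auto

lemma inc_mult_assoc:
  fixes f g h :: "'a::order \<Rightarrow> 'a \<Rightarrow> 'r::comm_ring_1"
  assumes lf: "locally_finite TYPE('a)"
  shows "((f \<star> g) \<star> h) x z = (f \<star> (g \<star> h)) x z"
proof -
  have fin: "finite {x..z}" by (rule locally_finiteD[OF lf])
  have "((f \<star> g) \<star> h) x z = (\<Sum>w\<in>{x..z}. \<Sum>y\<in>{y\<in>{x..z}. y \<le> w}. f x y * g y w * h w z)"
    unfolding inc_mult_def sum_distrib_right
    by (intro sum.cong) (auto intro: sum.cong)
  also have "\<dots> = (\<Sum>y\<in>{x..z}. \<Sum>w\<in>{w\<in>{x..z}. y \<le> w}. f x y * g y w * h w z)"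
    by (rule sum.swap_restrict[OF fin fin, symmetric])
  also have "\<dots> = (f \<star> (g \<star> h)) x z"
    unfolding inc_mult_def sum_distrib_left
    by (intro sum.cong) (auto simp: mult.assoc intro: sum.cong)
  finally show ?thesis .
qed

lemma inc_mult_unit_left:
  fixes f :: "'a::order \<Rightarrow> 'a \<Rightarrow> 'r::comm_ring_1"
  assumes "locally_finite TYPE('a)" "x \<le> y"
  shows "(inc_unit \<star> f) x y = f x y"
proof -
  have "(inc_unit \<star> f) x y = (\<Sum>w\<in>{x..y}. if x = w then f w y else 0)"
    unfolding inc_mult_def inc_unit_def by (rule sum.cong) auto
  then show ?thesis using assms locally_finiteD[OF assms(1), of x y] by simp
qed

lemma inc_mult_unit_right:
  fixes f :: "'a::order \<Rightarrow> 'a \<Rightarrow> 'r::comm_ring_1"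
  assumes "locally_finite TYPE('a)" "x \<le> y"
  shows "(f \<star> inc_unit) x y = f x y"
proof -
  have "(f \<star> inc_unit) x y = (\<Sum>w\<in>{x..y}. if w = y then f x w else 0)"
    unfolding inc_mult_def inc_unit_def by (rule sum.cong) auto
  then show ?thesis using assms locally_finiteD[OF assms(1), of x y] by simp
qed

lemma inc_mult_cong:
  assumes "inc_eq f f'" "inc_eq g g'"
  shows "inc_eq (f \<star> g) (f' \<star> g')"
  using assms unfolding inc_eq_def inc_mult_def by (auto intro: sum.cong)

lemma inc_inverse_unique:
  fixes f h k :: "'a::order \<Rightarrow> 'a \<Rightarrow> 'r::comm_ring_1"
  assumes lf: "locally_finite TYPE('a)"
    and left: "inc_eq (h \<star> f) inc_unit" and right: "inc_eq (f \<star> k) inc_unit"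
  shows "inc_eq h k"
  unfolding inc_eq_def
proof (intro allI impI)
  fix x y :: 'a assume xy: "x \<le> y"
  have "h x y = (h \<star> inc_unit) x y" by (simp add: inc_mult_unit_right[OF lf xy])
  also have "\<dots> = (h \<star> (f \<star> k)) x y"
    using inc_mult_cong[of h h "f \<star> k" inc_unit] right xy unfolding inc_eq_def by simp
  also have "\<dots> = ((h \<star> f) \<star> k) x y" by (rule inc_mult_assoc[OF lf, symmetric])
  also have "\<dots> = (inc_unit \<star> k) x y"
    using inc_mult_cong[of "h \<star> f" inc_unit k k] left xy unfolding inc_eq_def by simp
  also have "\<dots> = k x y" by (simp add: inc_mult_unit_left[OF lf xy])
  finally show "h x y = k x y" .
qed

text \<open>The row vector \<open>f\<close> is
  viewed as the incidence function \<open>\<lambda>_ x. f x\<close>.\<close>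
lemma row_inversion_imp:
  fixes e h :: "'a::order \<Rightarrow> 'a \<Rightarrow> 'r::comm_ring_1"
  assumes lf: "locally_finite TYPE('a)" and inv: "inc_inverse_of h e"
    and g: "\<forall>y. a \<le> y \<longrightarrow> g y = (\<Sum>x\<in>{a..y}. f x * e x y)"
  shows "\<forall>y. a \<le> y \<longrightarrow> f y = (\<Sum>x\<in>{a..y}. g x * h x y)"
proof (intro allI impI)
  fix y assume ay: "a \<le> y"
  let ?F = "\<lambda>_::'a. f"
  have "(\<Sum>x\<in>{a..y}. g x * h x y) = (((?F \<star> e) \<star> h) a y)"
    using g unfolding inc_mult_def by (intro sum.cong) auto
  also have "\<dots> = (?F \<star> (e \<star> h)) a y" by (rule inc_mult_assoc[OF lf])
  also have "\<dots> = (?F \<star> inc_unit) a y"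
    using inc_mult_cong[of ?F ?F "e \<star> h" inc_unit] inv ay
    unfolding inc_inverse_of_def inc_eq_def by blast
  also have "\<dots> = f y" by (simp add: inc_mult_unit_right[OF lf ay])
  finally show "f y = (\<Sum>x\<in>{a..y}. g x * h x y)" by simp
qed

text \<open>Since being inverse is symmetric, the inversion principle is an equivalence.\<close>
lemma row_inversion:
  fixes e h :: "'a::order \<Rightarrow> 'a \<Rightarrow> 'r::comm_ring_1"
  assumes lf: "locally_finite TYPE('a)" and inv: "inc_inverse_of h e"
  shows "(\<forall>y. a \<le> y \<longrightarrow> g y = (\<Sum>x\<in>{a..y}. f x * e x y))
     \<longleftrightarrow> (\<forall>y. a \<le> y \<longrightarrow> f y = (\<Sum>x\<in>{a..y}. g x * h x y))"
proof -
  have "inc_inverse_of e h" using inv unfolding inc_inverse_of_def by blast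
  then show ?thesis using row_inversion_imp[OF lf] inv by blast
qed

lemma sum_times_eta:
  fixes f :: "'a::order \<Rightarrow> 'r::comm_ring_1"
  assumes lf: "locally_finite TYPE('a)" and ay: "a \<le> y"
  shows "(\<Sum>x\<in>{a..y}. f x * eta x y) = f y - (\<Sum>x\<in>{x. a \<le> x \<and> x \<prec>\<^sub>c y}. f x)"
proof -
  have fin: "finite {a..y}" by (rule locally_finiteD[OF lf])
  have covers: "{x\<in>{a..y}. x \<prec>\<^sub>c y} = {x. a \<le> x \<and> x \<prec>\<^sub>c y}" by (auto simp: covers_def)
  have "(\<Sum>x\<in>{a..y}. f x * eta x y)
      = (\<Sum>x\<in>{a..y}. (if x = y then f y else 0) - (if x \<prec>\<^sub>c y then f x else 0))"
    by (rule sum.cong) (auto simp: eta_def covers_def)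
  also have "\<dots> = f y - (\<Sum>x\<in>{a..y}. if x \<prec>\<^sub>c y then f x else 0)"
    using ay fin by (simp add: sum_subtractf)
  also have "(\<Sum>x\<in>{a..y}. if x \<prec>\<^sub>c y then f x else 0) = (\<Sum>x\<in>{x\<in>{a..y}. x \<prec>\<^sub>c y}. f x)"
    by (rule sum.inter_filter[OF fin, symmetric])
  finally show ?thesis unfolding covers .
qed

lemma eta_times_sum:
  fixes f :: "'a::order \<Rightarrow> 'r::comm_ring_1"
  assumes lf: "locally_finite TYPE('a)" and xb: "x \<le> b"
  shows "(\<Sum>y\<in>{x..b}. eta x y * f y) = f x - (\<Sum>y\<in>{y. x \<prec>\<^sub>c y \<and> y \<le> b}. f y)"
proof -
  have fin: "finite {x..b}" by (rule locally_finiteD[OF lf])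
  have covers: "{y\<in>{x..b}. x \<prec>\<^sub>c y} = {y. x \<prec>\<^sub>c y \<and> y \<le> b}" by (auto simp: covers_def)
  have "(\<Sum>y\<in>{x..b}. eta x y * f y)
      = (\<Sum>y\<in>{x..b}. (if x = y then f x else 0) - (if x \<prec>\<^sub>c y then f y else 0))"
    by (rule sum.cong) (auto simp: eta_def covers_def)
  also have "\<dots> = f x - (\<Sum>y\<in>{x..b}. if x \<prec>\<^sub>c y then f y else 0)"
    using xb fin by (simp add: sum_subtractf)
  also have "(\<Sum>y\<in>{x..b}. if x \<prec>\<^sub>c y then f y else 0) = (\<Sum>y\<in>{y\<in>{x..b}. x \<prec>\<^sub>c y}. f y)"
    by (rule sum.inter_filter[OF fin, symmetric])
  finally show ?thesis unfolding covers .
qed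

subsection \<open>Counting maximal chains of a poset\<close>

interpretation up: poset_rel "(\<le>) :: 'a::order \<Rightarrow> 'a \<Rightarrow> bool"
  by unfold_locales auto

interpretation down: poset_rel "\<lambda>a b :: 'a::order. b \<le> a"
  by unfold_locales auto

lemma up_ivl: "up.ivl x z = {x..z}"
  unfolding up.ivl_def by auto

lemma down_ivl: "down.ivl z x = {x..z}"
  unfolding down.ivl_def by auto

lemma up_totally_ordered: "up.totally_ordered C \<longleftrightarrow> linearly_ordered C"
  unfolding up.totally_ordered_def linearly_ordered_def by blast

lemma down_totally_ordered: "down.totally_ordered C \<longleftrightarrow> linearly_ordered C"
  unfolding down.totally_ordered_def linearly_ordered_def by blast

lemma max_chains_up: "max_chains x z = up.maxchains x z"
  unfolding max_chains_def up.maxchains_def up_ivl up_totally_ordered ..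

lemma max_chains_down: "max_chains x z = down.maxchains z x"
  unfolding max_chains_def down.maxchains_def down_ivl down_totally_ordered ..

lemma up_covered_by: "up.covered_by y z \<longleftrightarrow> y \<prec>\<^sub>c z"
  unfolding up.covered_by_def covers_def by (auto simp: less_le)

lemma down_covered_by: "down.covered_by y x \<longleftrightarrow> x \<prec>\<^sub>c y"
  unfolding down.covered_by_def covers_def by (auto simp: less_le)

lemma card_max_chains_refl: "card (max_chains x x) = 1"
  by (simp add: max_chains_up up.maxchains_refl)

lemma card_max_chains_top:
  assumes lf: "locally_finite TYPE('a::order)" and "(x::'a) \<le> z" "x \<noteq> z"
  shows "card (max_chains x z) = (\<Sum>y\<in>{y. x \<le> y \<and> y \<prec>\<^sub>c z}. card (max_chains x y))"
proof -
  have "finite (up.ivl x z)"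
    using locally_finiteD[OF lf, of x z] unfolding up_ivl .
  from up.card_maxchains_rec[OF this assms(2,3)] show ?thesis
    unfolding max_chains_up up_covered_by .
qed

lemma card_max_chains_bottom:
  assumes lf: "locally_finite TYPE('a::order)" and "(x::'a) \<le> z" "x \<noteq> z"
  shows "card (max_chains x z) = (\<Sum>y\<in>{y. x \<prec>\<^sub>c y \<and> y \<le> z}. card (max_chains y z))"
proof -
  have "finite (down.ivl z x)"
    using locally_finiteD[OF lf, of x z] unfolding down_ivl .
  from down.card_maxchains_rec[OF this assms(2)] assms(3) show ?thesis
    unfolding max_chains_down down_covered_by by (simp add: conj_commute)
qed

definition chain_count :: "'a::order \<Rightarrow> 'a \<Rightarrow> 'r::comm_ring_1" where
  "chain_count x y = of_nat (card (max_chains x y))"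

text \<open>The recursion over lower covers says that \<open>chain_count\<close> is a left inverse of \<open>eta\<close>.\<close>
lemma chain_count_times_eta:
  assumes lf: "locally_finite TYPE('a::order)"
  shows "inc_eq (chain_count \<star> eta) (inc_unit :: 'a \<Rightarrow> 'a \<Rightarrow> 'r::comm_ring_1)"
  unfolding inc_eq_def
proof (intro allI impI)
  fix x z :: 'a assume xz: "x \<le> z"
  have "(chain_count \<star> eta) x z
      = (chain_count x z :: 'r) - (\<Sum>y\<in>{y. x \<le> y \<and> y \<prec>\<^sub>c z}. (chain_count x y :: 'r))"
    unfolding inc_mult_def by (rule sum_times_eta[OF lf xz])
  also have "\<dots> = inc_unit x z"
  proof (cases "x = z")
    case True
    then have no_covers: "{y. x \<le> y \<and> y \<prec>\<^sub>c z} = {}" by (auto simp: covers_def)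
    show ?thesis unfolding no_covers using True
      by (simp add: chain_count_def card_max_chains_refl inc_unit_def)
  next
    case False
    then show ?thesis
      by (simp add: chain_count_def inc_unit_def card_max_chains_top[OF lf xz False])
  qed
  finally show "(chain_count \<star> eta) x z = (inc_unit x z :: 'r)" .
qed

text \<open>Dually, the recursion over upper covers makes it a right inverse.\<close>
lemma eta_times_chain_count:
  assumes lf: "locally_finite TYPE('a::order)"
  shows "inc_eq (eta \<star> chain_count) (inc_unit :: 'a \<Rightarrow> 'a \<Rightarrow> 'r::comm_ring_1)"
  unfolding inc_eq_def
proof (intro allI impI)
  fix x z :: 'a assume xz: "x \<le> z"
  have "(eta \<star> chain_count) x z
      = (chain_count x z :: 'r) - (\<Sum>y\<in>{y. x \<prec>\<^sub>c y \<and> y \<le> z}. (chain_count y z :: 'r))"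
    unfolding inc_mult_def by (rule eta_times_sum[OF lf xz])
  also have "\<dots> = inc_unit x z"
  proof (cases "x = z")
    case True
    then have no_covers: "{y. x \<prec>\<^sub>c y \<and> y \<le> z} = {}" by (auto simp: covers_def)
    show ?thesis unfolding no_covers using True
      by (simp add: chain_count_def card_max_chains_refl inc_unit_def)
  next
    case False
    then show ?thesis
      by (simp add: chain_count_def inc_unit_def card_max_chains_bottom[OF lf xz False])
  qed
  finally show "(eta \<star> chain_count) x z = (inc_unit x z :: 'r)" .
qed

lemma chain_count_inverse_eta:
  assumes "locally_finite TYPE('a::order)"
  shows "inc_inverse_of chain_count (eta :: 'a \<Rightarrow> 'a \<Rightarrow> 'r::comm_ring_1)"
  unfolding inc_inverse_of_def
  using eta_times_chain_count[OF assms] chain_count_times_eta[OF assms] by blast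

theorem mainTheorem7:
  assumes "locally_finite TYPE('a::order)"
  shows "inc_invertible (eta :: 'a \<Rightarrow> 'a \<Rightarrow> 'r::comm_ring_1)
    \<and> (\<forall>h. inc_inverse_of h (eta :: 'a \<Rightarrow> 'a \<Rightarrow> 'r) \<longrightarrow>
          (\<forall>x y. x \<le> y \<longrightarrow> h x y = of_nat (card (max_chains x y))))
    \<and> (\<forall>(a::'a) (f::'a \<Rightarrow> 'r) g.
          (\<forall>y. a \<le> y \<longrightarrow> g y = f y - (\<Sum>x\<in>{x. a \<le> x \<and> x \<prec>\<^sub>c y}. f x))
          \<longleftrightarrow> (\<forall>y. a \<le> y \<longrightarrow> f y = (\<Sum>x\<in>{a..y}. of_nat (card (max_chains x y)) * g x)))"
proof (intro conjI allI impI)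
  show "inc_invertible (eta :: 'a \<Rightarrow> 'a \<Rightarrow> 'r)"
    using chain_count_inverse_eta[OF assms] unfolding inc_invertible_def by blast
next
  fix h :: "'a \<Rightarrow> 'a \<Rightarrow> 'r" and x y :: 'a
  assume "inc_inverse_of h eta" "x \<le> y"
  then show "h x y = of_nat (card (max_chains x y))"
    using inc_inverse_unique[OF assms, of h eta chain_count] chain_count_inverse_eta[OF assms]
    unfolding inc_inverse_of_def inc_eq_def chain_count_def by blast
next
  fix a :: 'a and f g :: "'a \<Rightarrow> 'r"
  have "(\<forall>y. a \<le> y \<longrightarrow> g y = f y - (\<Sum>x\<in>{x. a \<le> x \<and> x \<prec>\<^sub>c y}. f x))
      \<longleftrightarrow> (\<forall>y. a \<le> y \<longrightarrow> g y = (\<Sum>x\<in>{a..y}. f x * eta x y))"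
    by (simp add: sum_times_eta[OF assms])
  also have "\<dots> \<longleftrightarrow> (\<forall>y. a \<le> y \<longrightarrow> f y = (\<Sum>x\<in>{a..y}. g x * chain_count x y))"
    by (rule row_inversion[OF assms chain_count_inverse_eta[OF assms]])
  also have "\<dots> \<longleftrightarrow> (\<forall>y. a \<le> y \<longrightarrow> f y = (\<Sum>x\<in>{a..y}. of_nat (card (max_chains x y)) * g x))"
    by (simp add: chain_count_def mult.commute)
  finally show "(\<forall>y. a \<le> y \<longrightarrow> g y = f y - (\<Sum>x\<in>{x. a \<le> x \<and> x \<prec>\<^sub>c y}. f x))
      \<longleftrightarrow> (\<forall>y. a \<le> y \<longrightarrow> f y = (\<Sum>x\<in>{a..y}. of_nat (card (max_chains x y)) * g x))" .
qed

end
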